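(* Let $f$ be as in the standing setting and satisfy quadratic functional growth with constant $\kappa_f>0$: $f(x)-f^*\ge\frac{\kappa_f}{2}\|x-[x]_{X^*}\|^2$ for all $x\in X$. Let $\beta\ge0$, $L>0$, $\bar L_f>0$, and let $\{x^k\}\subseteq X$ be generated by a feasible descent method: for $k\ge0$, $$x^{k+1}=\big[x^k-\alpha_k\nabla f(x^k)+e^k\big]_X$$ with step sizes $\alpha_k\ge\bar L_f^{-1}$ and perturbations $e^k$ satisfying $\|e^k\|\le\beta\|x^{k+1}-x^k\|$ and $f(x^{k+1})\le f(x^k)-\frac{L}{2}\|x^{k+1}-x^k\|^2$. Then $$f(x^k)-f^*\le\left(\frac{1}{1+\frac{L\kappa_f}{4(L_f+\bar L_f+\beta\bar L_f)^2}}\right)^k\big(f(x^0)-f^*\big)\qquad\forall k\ge0.$$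
   Context: Standing setting: $X\subseteq\mathbb{R}^n$ is a nonempty closed convex set; $f:X\to\mathbb{R}$ is convex and continuously differentiable, with $L_f$-Lipschitz continuous gradient on $X$ ($L_f>0$). Consider $f^*=\min_{x\in X}f(x)$ with optimal set $X^*$ nonempty and closed and $f^*$ finite. $\|\cdot\|$ is the Euclidean norm and $[u]_S$ is the Euclidean projection onto a closed convex set $S$. *)

theory Defs
  imports "HOL-Analysis.Analysis"
begin

end

theory Submission imports Defs begin

text \<open>Let \<open>x\<^sup>+\<close> be the next iterate and \<open>x\<^sup>*\<close> its projection onto the optimal set.
  Convexity at \<open>x\<^sup>+\<close>, the variational inequality of the projection defining \<open>x\<^sup>+\<close>, the
  Lipschitz gradient and the bound on the perturbation combine to
  \<open>f x\<^sup>+ - f\<^sup>* \<le> C \<parallel>x\<^sup>+ - x\<parallel> \<parallel>x\<^sup>+ - x\<^sup>*\<parallel>\<close> with \<open>C = Lf + Lbar + beta * Lbar\<close>.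
  Quadratic growth bounds \<open>\<parallel>x\<^sup>+ - x\<^sup>*\<parallel>\<^sup>2\<close> and sufficient decrease bounds
  \<open>\<parallel>x\<^sup>+ - x\<parallel>\<^sup>2\<close> by optimality gaps, so squaring gives
  \<open>L kappa (f x\<^sup>+ - f\<^sup>*) \<le> 4 C\<^sup>2 (f x - f x\<^sup>+)\<close>, a linear contraction of the gap.\<close>

lemma convex_on_above_tangent_within:
  fixes f :: "'a::real_normed_vector \<Rightarrow> real"
  assumes "convex X" "convex_on X f" "x \<in> X" "y \<in> X"
    and deriv: "(f has_derivative D) (at x within X)"
  shows "f x + D (y - x) \<le> f y"
proof -
  define p where "p = (\<lambda>t::real. x + t *\<^sub>R (y - x))"
  have p_eq: "p t = (1 - t) *\<^sub>R x + t *\<^sub>R y" for t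
    by (simp add: p_def algebra_simps)
  have segment: "p ` {0..1} \<subseteq> X"
    using assms(1,3,4) by (auto simp: p_eq intro: convexD_alt)
  have "(p has_derivative (\<lambda>t. t *\<^sub>R (y - x))) (at 0 within {0..1})"
    unfolding p_def by (auto intro!: derivative_eq_intros)
  moreover have "(f has_derivative D) (at (p 0) within p ` {0..1})"
    using has_derivative_subset[OF deriv segment] by (simp add: p_def)
  ultimately have "((\<lambda>t. f (p t)) has_derivative (\<lambda>t. D (t *\<^sub>R (y - x)))) (at 0 within {0..1})"
    by (rule has_derivative_in_compose)
  moreover have "(\<lambda>t. D (t *\<^sub>R (y - x))) = (*) (D (y - x))"
    using linear_cmul[OF has_derivative_linear[OF deriv]] by auto
  ultimately have "((\<lambda>t. f (p t)) has_field_derivative D (y - x)) (at 0 within {0..1})"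
    by (simp add: has_field_derivative_def)
  then have "((\<lambda>t. (f (p t) - f (p 0)) / (t - 0)) \<longlongrightarrow> D (y - x)) (at 0 within {0..1})"
    by (simp add: has_field_derivative_iff)
  moreover have "eventually (\<lambda>t. (f (p t) - f (p 0)) / (t - 0) \<le> f y - f x) (at 0 within {0..1})"
    unfolding eventually_at_filter
  proof (intro always_eventually allI impI)
    fix t :: real assume t: "t \<noteq> 0" "t \<in> {0..1}"
    have "f (p t) \<le> (1 - t) * f x + t * f y"
      using convex_onD[OF assms(2), of t x y] t assms(3,4) by (auto simp: p_eq)
    then show "(f (p t) - f (p 0)) / (t - 0) \<le> f y - f x"
      using t by (simp add: p_def divide_simps algebra_simps)
  qed
  moreover have "{0..1::real} - {0} = {0<..1}"
    by auto
  then have "at (0::real) within {0..1} \<noteq> bot"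
    by (simp add: at_within_eq_bot_iff)
  ultimately have "D (y - x) \<le> f y - f x"
    using tendsto_le tendsto_const by blast
  then show ?thesis by simp
qed

lemma projected_gradient_step_gap_bound:
  fixes X :: "'a::euclidean_space set" and f :: "'a \<Rightarrow> real" and gradf :: "'a \<Rightarrow> 'a"
  assumes X: "convex X" "closed X" and f_convex: "convex_on X f"
    and xX: "x \<in> X" and zX: "z \<in> X"
    and x': "x' = closest_point X (x - a *\<^sub>R gradf x + e)"
    and deriv: "(f has_derivative (\<lambda>h. gradf x' \<bullet> h)) (at x' within X)"
    and lip: "norm (gradf x' - gradf x) \<le> Lf * norm (x' - x)"
    and Lbar: "Lbar > 0" "a \<ge> 1 / Lbar"
    and err: "norm e \<le> beta * norm (x' - x)" and "beta \<ge> 0"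
  shows "f x' - f z \<le> (Lf + Lbar + beta * Lbar) * norm (x' - x) * norm (x' - z)"
proof -
  define d where "d = norm (x' - x)"
  define r where "r = norm (x' - z)"
  have x'X: "x' \<in> X"
    using closest_point_in_set[OF X(2)] xX x' by blast
  have a_pos: "a > 0"
    using Lbar by (meson less_le_trans zero_less_divide_1_iff)
  have "(x - a *\<^sub>R gradf x + e - x') \<bullet> (z - x') \<le> 0"
    using closest_point_dot[OF X zX] x' by simp
  then have "a * (gradf x \<bullet> (x' - z)) \<le> (x - x' + e) \<bullet> (x' - z)"
    by (simp add: inner_diff_left inner_diff_right inner_add_left algebra_simps)
  also have "\<dots> \<le> norm (x - x' + e) * r"
    unfolding r_def by (rule norm_cauchy_schwarz)
  also have "\<dots> \<le> (1 + beta) * d * r"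
  proof (rule mult_right_mono)
    have "norm (x - x' + e) \<le> norm (x - x') + norm e"
      by (rule norm_triangle_ineq)
    then show "norm (x - x' + e) \<le> (1 + beta) * d"
      using err by (simp add: d_def norm_minus_commute algebra_simps)
  qed (simp add: r_def)
  finally have "gradf x \<bullet> (x' - z) \<le> (1 / a) * ((1 + beta) * d * r)"
    using a_pos by (simp add: divide_simps mult.commute)
  also have "\<dots> \<le> Lbar * ((1 + beta) * d * r)"
    using Lbar a_pos \<open>beta \<ge> 0\<close>
    by (intro mult_right_mono) (simp_all add: divide_simps mult.commute d_def r_def)
  finally have step_term: "gradf x \<bullet> (x' - z) \<le> Lbar * (1 + beta) * d * r"
    by simp
  have "(gradf x' - gradf x) \<bullet> (x' - z) \<le> norm (gradf x' - gradf x) * r"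
    unfolding r_def by (rule norm_cauchy_schwarz)
  also have "\<dots> \<le> Lf * d * r"
    using lip by (auto simp: d_def r_def intro: mult_right_mono)
  finally have lip_term: "(gradf x' - gradf x) \<bullet> (x' - z) \<le> Lf * d * r" .
  have "f x' - f z \<le> gradf x' \<bullet> (x' - z)"
    using convex_on_above_tangent_within[OF X(1) f_convex x'X zX deriv]
    by (simp add: inner_diff_right)
  also have "\<dots> = (gradf x' - gradf x) \<bullet> (x' - z) + gradf x \<bullet> (x' - z)"
    by (simp add: inner_diff_left)
  finally show ?thesis
    using step_term lip_term by (simp add: d_def r_def algebra_simps)
qed

lemma gap_contraction_from_error_bound:
  fixes C kappa L d r D D' :: real
  assumes "C > 0" "kappa > 0" "L > 0"
    and error_bound: "D' \<le> C * d * r"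
    and growth: "kappa / 2 * r\<^sup>2 \<le> D'"
    and decrease: "L / 2 * d\<^sup>2 \<le> D - D'"
  shows "D' \<le> 1 / (1 + L * kappa / (4 * C\<^sup>2)) * D"
proof -
  have "kappa / 2 * r\<^sup>2 \<ge> 0" "L / 2 * d\<^sup>2 \<ge> 0"
    using \<open>kappa > 0\<close> \<open>L > 0\<close> by simp_all
  then have D'_nonneg: "D' \<ge> 0" and "D' \<le> D"
    using growth decrease by linarith+
  have "L * kappa * D' \<le> 4 * C\<^sup>2 * (D - D')"
  proof (cases "D' = 0")
    case True
    then show ?thesis using \<open>D' \<le> D\<close> by simp
  next
    case False
    have "D' * D' \<le> C\<^sup>2 * d\<^sup>2 * r\<^sup>2"
      using power_mono[OF error_bound D'_nonneg, of 2]
      by (simp add: power2_eq_square algebra_simps)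
    also have "\<dots> \<le> C\<^sup>2 * d\<^sup>2 * (2 / kappa * D')"
    proof (rule mult_left_mono)
      show "r\<^sup>2 \<le> 2 / kappa * D'"
        using growth \<open>kappa > 0\<close> by (simp add: field_simps)
    qed simp
    finally have "D' * D' \<le> (2 * C\<^sup>2 * d\<^sup>2 / kappa) * D'"
      by (simp add: algebra_simps)
    moreover have "D' > 0"
      using False D'_nonneg by simp
    ultimately have "D' \<le> 2 * C\<^sup>2 * d\<^sup>2 / kappa"
      by (rule mult_right_le_imp_le)
    then have "kappa * D' \<le> 2 * C\<^sup>2 * d\<^sup>2"
      using \<open>kappa > 0\<close> by (simp add: field_simps)
    then have "L * kappa * D' \<le> 4 * C\<^sup>2 * (L / 2 * d\<^sup>2)"
      using mult_left_mono[of _ _ L] \<open>L > 0\<close> by fastforce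
    also have "\<dots> \<le> 4 * C\<^sup>2 * (D - D')"
      using decrease by (intro mult_left_mono) simp_all
    finally show ?thesis .
  qed
  moreover have "1 / (1 + L * kappa / (4 * C\<^sup>2)) = 4 * C\<^sup>2 / (4 * C\<^sup>2 + L * kappa)"
    using \<open>C > 0\<close> by (simp add: field_simps)
  moreover have "4 * C\<^sup>2 + L * kappa > 0"
    using \<open>C > 0\<close> \<open>L > 0\<close> \<open>kappa > 0\<close> by (simp add: add_pos_pos)
  ultimately show ?thesis
    by (simp add: pos_le_divide_eq algebra_simps)
qed

lemma geometric_decay:
  fixes u :: "nat \<Rightarrow> real"
  assumes "q \<ge> 0" and step: "\<And>k. u (Suc k) \<le> q * u k"
  shows "u k \<le> q ^ k * u 0"
proof (induction k)
  case (Suc k)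
  have "u (Suc k) \<le> q * u k" by (rule step)
  also have "\<dots> \<le> q * (q ^ k * u 0)"
    using Suc.IH \<open>q \<ge> 0\<close> by (rule mult_left_mono)
  finally show ?case by simp
qed simp

theorem theorem15:
  fixes X :: "'a::euclidean_space set"
    and f :: "'a \<Rightarrow> real" and gradf :: "'a \<Rightarrow> 'a"
    and Lf kappa beta L Lbar fstar :: real
    and x e :: "nat \<Rightarrow> 'a" and alpha :: "nat \<Rightarrow> real"
  assumes X_ne: "X \<noteq> {}" and X_closed: "closed X" and X_convex: "convex X"
    and f_convex: "convex_on X f"
    and f_grad: "\<And>y. y \<in> X \<Longrightarrow> (f has_derivative (\<lambda>h. gradf y \<bullet> h)) (at y within X)"
    and grad_cont: "continuous_on X gradf"
    and Lf_pos: "Lf > 0"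
    and grad_lip: "\<And>y z. y \<in> X \<Longrightarrow> z \<in> X \<Longrightarrow> norm (gradf y - gradf z) \<le> Lf * norm (y - z)"
    and fstar_def: "fstar = (INF y\<in>X. f y)"
    and Xstar_ne: "{y \<in> X. f y = fstar} \<noteq> {}"
    and Xstar_closed: "closed {y \<in> X. f y = fstar}"
    and kappa_pos: "kappa > 0"
    and qfg: "\<And>y. y \<in> X \<Longrightarrow>
        f y - fstar \<ge> kappa / 2 * (norm (y - closest_point {z \<in> X. f z = fstar} y))\<^sup>2"
    and beta_nn: "beta \<ge> 0" and L_pos: "L > 0" and Lbar_pos: "Lbar > 0"
    and x_in: "\<And>k. x k \<in> X"
    and iter: "\<And>k. x (Suc k) = closest_point X (x k - alpha k *\<^sub>R gradf (x k) + e k)"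
    and step: "\<And>k. alpha k \<ge> 1 / Lbar"
    and err: "\<And>k. norm (e k) \<le> beta * norm (x (Suc k) - x k)"
    and descent: "\<And>k. f (x (Suc k)) \<le> f (x k) - L / 2 * (norm (x (Suc k) - x k))\<^sup>2"
  shows "\<And>k. f (x k) - fstar \<le>
     (1 / (1 + L * kappa / (4 * (Lf + Lbar + beta * Lbar)\<^sup>2))) ^ k * (f (x 0) - fstar)"
proof (rule geometric_decay)
  let ?S = "{y \<in> X. f y = fstar}"
  let ?C = "Lf + Lbar + beta * Lbar"
  have C_pos: "?C > 0"
    using Lf_pos Lbar_pos beta_nn by (simp add: add_pos_nonneg)
  then show "1 / (1 + L * kappa / (4 * ?C\<^sup>2)) \<ge> 0"
    using L_pos kappa_pos by simp
  fix k
  define z where "z = closest_point ?S (x (Suc k))"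
  have "z \<in> ?S"
    unfolding z_def using closest_point_in_set[OF Xstar_closed Xstar_ne] .
  then have zX: "z \<in> X" and fz: "f z = fstar"
    by simp_all
  have "f (x (Suc k)) - fstar \<le> ?C * norm (x (Suc k) - x k) * norm (x (Suc k) - z)"
    using projected_gradient_step_gap_bound[OF X_convex X_closed f_convex x_in zX iter
        f_grad[OF x_in] grad_lip[OF x_in x_in] Lbar_pos step err beta_nn] fz by simp
  then show "f (x (Suc k)) - fstar \<le> 1 / (1 + L * kappa / (4 * ?C\<^sup>2)) * (f (x k) - fstar)"
  proof (rule gap_contraction_from_error_bound[OF C_pos kappa_pos L_pos])
    show "kappa / 2 * (norm (x (Suc k) - z))\<^sup>2 \<le> f (x (Suc k)) - fstar"
      using qfg[OF x_in] by (simp add: z_def)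
    show "L / 2 * (norm (x (Suc k) - x k))\<^sup>2 \<le> (f (x k) - fstar) - (f (x (Suc k)) - fstar)"
      using descent[of k] by simp
  qed
qed

end
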